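(* Fix $i$. Suppose the following hold. (C1) $\varepsilon_{it}=g_i(\mathcal{F}_{it})$ with $\mathcal{F}_{it}=(\dots,\eta_{i,t-1},\eta_{it})$, $\eta_{it}$ i.i.d. across $t$, $g_i$ measurable, $\mathbb{E}[\varepsilon_{it}]=0$ and $\|\varepsilon_{it}\|_q\le C<\infty$ for some $q>4$. (C3) $\sum_{s\ge0}\delta_q(g_i,s)<\infty$ and $\sum_{s\ge t}\delta_q(g_i,s)=O(t^{-\gamma}(\log t)^{-A})$ with $A>\frac23(1/q+1+\gamma)$ and $\gamma=\{q^2-4+(q-2)\sqrt{q^2+20q+4}\}/(8q)$. (C4) For $1\le j\le d$, $X_{it,j}=h_{ij}(\mathcal{G}_{it,j})$ with $\mathcal{G}_{it,j}=(\dots,\xi_{i,t-1,j},\xi_{it,j})$, $\xi_{it,j}$ i.i.d. across $t$, $h_{ij}$ measurable, $\mathbb{E}[X_{it,j}]=0$ and $\|X_{it,j}\|_{q'}<\infty$, where $q'>\max\{4,\theta q\}$ for a fixed constant $\theta>0$. (C6) For all $j$, $\sum_{s\ge0}\delta_{q'}(h_{ij},s)<\infty$ and $\sum_{s\ge t}\delta_{q'}(h_{ij},s)=O(t^{-\alpha})$ for some $\alpha>1/2-1/q'$. Define $\mathbf{a}_i(\mathcal{H}_{it})=\Delta\mathbf{X}_{it}\Delta\varepsilon_{it}$ with components $a_{ij}$, and $\mathbf{b}_i(\mathcal{G}_{it})=\Delta\mathbf{X}_{it}\Delta\mathbf{X}_{it}^\top$ with entries $b_{ikl}$, where $\Delta\mathbf{X}_{it}=\mathbf{X}_{it}-\mathbf{X}_{i,t-1}$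 and $\Delta\varepsilon_{it}=\varepsilon_{it}-\varepsilon_{i,t-1}$. Then for all $j,k,l\in\{1,\dots,d\}$: \[ \sum_{s=t}^\infty\delta_p(a_{ij},s)=O(t^{-\alpha_1})\ \text{for } p=\min\{q,q'\}/2 \text{ and some } \alpha_1>1/2-1/p, \] \[ \sum_{s=t}^\infty\delta_p(b_{ikl},s)=O(t^{-\alpha_2})\ \text{for } p=q'/2 \text{ and some } \alpha_2>1/2-1/p. \]
   Context: Physical dependence measure: for i.i.d. innovations $\zeta_t$, $\mathcal{F}_t=(\dots,\zeta_{t-1},\zeta_t)$ and measurable $g$, $\delta_q(g,t)=\|g(\mathcal{F}_t)-g(\mathcal{F}_t')\|_q$, where $\mathcal{F}_t'$ is $\mathcal{F}_t$ with $\zeta_0$ replaced by an independent copy $\zeta_0'$; $\|V\|_q=(\mathbb{E}|V|^q)^{1/q}$. The component $a_{ij}$ is regarded as a function of $\mathcal{H}_{it,j}=(\dots,\nu_{i,t-1,j},\nu_{it,j})$ with joint innovations $\nu_{it,j}=(\eta_{it},\xi_{it,j})$, and $b_{ikl}$ as a function of $\mathcal{G}_{it}=(\mathcal{G}_{it,1},\dots,\mathcal{G}_{it,d})$; their physical dependence measures are computed with respect to these innovation sequences (replacing the time-$0$ innovation by an independent copy). *)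

theory Defs
  imports "HOL-Probability.Probability" "HOL-Library.Landau_Symbols"
begin

definition lpnorm :: "'a measure \<Rightarrow> real \<Rightarrow> ('a \<Rightarrow> real) \<Rightarrow> real" where
  "lpnorm M q f = (\<integral>x. \<bar>f x\<bar> powr q \<partial>M) powr (1 / q)"

definition memLp :: "'a measure \<Rightarrow> real \<Rightarrow> ('a \<Rightarrow> real) \<Rightarrow> bool" where
  "memLp M q f \<longleftrightarrow> f \<in> borel_measurable M \<and> integrable M (\<lambda>x. \<bar>f x\<bar> powr q)"

text \<open>Law of the past innovation sequence: x m plays the role of the innovation at
  time (current time - m); the coordinates are i.i.d. with law mu.\<close>
definition seqlaw :: "'s measure \<Rightarrow> (nat \<Rightarrow> 's) measure" where
  "seqlaw \<mu> = PiM UNIV (\<lambda>_. \<mu>)"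

text \<open>Physical dependence measure delta_q(g,t), t >= 0: the filtration at time t is
  x with x m = zeta_(t-m); replacing zeta_0 (coordinate t) by an independent copy x'.\<close>
definition pdm :: "'s measure \<Rightarrow> real \<Rightarrow> ((nat \<Rightarrow> 's) \<Rightarrow> real) \<Rightarrow> nat \<Rightarrow> real" where
  "pdm \<mu> q g t = lpnorm (seqlaw \<mu> \<Otimes>\<^sub>M \<mu>) q (\<lambda>z. g (fst z) - g ((fst z)(t := snd z)))"

end

theory Submission
  imports Defs
begin

(* Both summands are products U V of first differences of Bernoulli shifts.  Coupling with the
   process whose time-0 innovation is replaced, u v - u' v' = u (v - v') + v' (u - u'), so Minkowski's
   and Hoelder's inequalities give
     delta_p(U V, s) <= |V|_2p delta_2p(U, s) + |U|_2p delta_2p(V, s).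
   A first difference f(F_t) - f(F_(t-1)) has delta_2p(., s) <= delta_r(f, s) + delta_r(f, s - 1)
   for 2p <= r, by Lyapunov's inequality and because the lagged process feels the time-0 innovation
   one step later.  Hence the dependence tails of the products are bounded by those of the factors
   at t and t - 1, which are O(t^-alpha) resp. O(t^-gamma); as gamma > 1/2 and p <= q'/2, the
   resulting rate exceeds 1/2 - 1/p. *)

section \<open>Moments and \<open>L\<^sup>p\<close> norms\<close>

lemma powr_double: "(c::real) powr (2 * r) = (c powr r)\<^sup>2"
  by (simp add: power2_eq_square flip: powr_add)

lemma abs_add_powr_le:
  fixes a b r :: real
  assumes "0 < r"
  shows "\<bar>a + b\<bar> powr r \<le> 2 powr r * (\<bar>a\<bar> powr r + \<bar>b\<bar> powr r)"
proof -
  have "\<bar>a + b\<bar> powr r \<le> (2 * max \<bar>a\<bar> \<bar>b\<bar>) powr r"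
    using assms by (intro powr_mono2) auto
  also have "\<dots> = 2 powr r * max \<bar>a\<bar> \<bar>b\<bar> powr r"
    by (simp add: powr_mult)
  also have "max \<bar>a\<bar> \<bar>b\<bar> powr r \<le> \<bar>a\<bar> powr r + \<bar>b\<bar> powr r"
    by (cases "\<bar>a\<bar> \<le> \<bar>b\<bar>") (auto simp: max_def)
  finally show ?thesis
    by (simp add: mult_left_mono)
qed

lemma abs_mult_powr_le_scaled:
  fixes x y a b r :: real
  assumes "0 < a" "0 < b"
  shows "\<bar>x * y\<bar> powr r \<le> a * b * ((\<bar>x\<bar> powr (2 * r) / a\<^sup>2 + \<bar>y\<bar> powr (2 * r) / b\<^sup>2) / 2)"
proof -
  define u where "u = \<bar>x\<bar> powr r / a"
  define v where "v = \<bar>y\<bar> powr r / b"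
  have "\<bar>x * y\<bar> powr r = a * b * (u * v)"
    using assms by (simp add: abs_mult powr_mult u_def v_def)
  also have "u * v \<le> (u\<^sup>2 + v\<^sup>2) / 2"
    using sum_squares_bound[of u v] by simp
  finally show ?thesis
    using assms by (simp add: u_def v_def powr_double power_divide mult_left_mono)
qed

lemma convex_comb_powr_le:
  fixes x y t r :: real
  assumes "1 \<le> r" "0 \<le> x" "0 \<le> y" "0 \<le> t" "t \<le> 1"
  shows "(t * x + (1 - t) * y) powr r \<le> t * x powr r + (1 - t) * y powr r"
proof -
  have scale: "(c * z) powr r \<le> c * z powr r" if "0 \<le> c" "c \<le> 1" "0 \<le> z" for c z :: real
  proof -
    have "c powr r \<le> c"
      using that assms powr_mono'[of 1 r c] by (cases "c = 0") auto
    then show ?thesis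
      using that by (simp add: powr_mult mult_right_mono)
  qed
  consider "x = 0" | "y = 0" | "0 < x" "0 < y"
    using assms by linarith
  then show ?thesis
  proof cases
    case 3
    then show ?thesis
      using convex_onD[OF powr_convex[OF assms(1)], of t y x] assms by (simp add: algebra_simps)
  qed (use scale[of t x] scale[of "1 - t" y] assms in auto)
qed

lemma abs_add_powr_le_convex:
  fixes x y a b r :: real
  assumes r: "1 \<le> r" and ab: "0 < a" "0 < b"
  shows "\<bar>x + y\<bar> powr r
    \<le> (a + b) powr r * (a / (a + b) * (\<bar>x\<bar> / a) powr r + b / (a + b) * (\<bar>y\<bar> / b) powr r)"
proof -
  define t where "t = a / (a + b)"
  have t: "0 \<le> t" "t \<le> 1" "1 - t = b / (a + b)"
    using ab by (auto simp: t_def field_simps)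
  have "t * (\<bar>x\<bar> / a) + (1 - t) * (\<bar>y\<bar> / b) = (\<bar>x\<bar> + \<bar>y\<bar>) / (a + b)"
    using ab unfolding t(3) by (simp add: t_def add_divide_distrib)
  then have "\<bar>x\<bar> + \<bar>y\<bar> = (a + b) * (t * (\<bar>x\<bar> / a) + (1 - t) * (\<bar>y\<bar> / b))"
    using ab by simp
  then have "\<bar>x + y\<bar> powr r \<le> ((a + b) * (t * (\<bar>x\<bar> / a) + (1 - t) * (\<bar>y\<bar> / b))) powr r"
    using r abs_triangle_ineq[of x y] by (intro powr_mono2) auto
  also have "\<dots> = (a + b) powr r * (t * (\<bar>x\<bar> / a) + (1 - t) * (\<bar>y\<bar> / b)) powr r"
    using ab t by (simp add: powr_mult)
  also have "(t * (\<bar>x\<bar> / a) + (1 - t) * (\<bar>y\<bar> / b)) powr r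
      \<le> t * (\<bar>x\<bar> / a) powr r + (1 - t) * (\<bar>y\<bar> / b) powr r"
    using ab t r by (intro convex_comb_powr_le) auto
  finally show ?thesis
    using ab unfolding t_def[symmetric] t(3)[symmetric] by (simp add: mult_left_mono)
qed

lemma powr_le_tangent_at_1:
  fixes y \<theta> :: real
  assumes "0 < \<theta>" "\<theta> \<le> 1" "0 \<le> y"
  shows "y powr \<theta> \<le> \<theta> * y + (1 - \<theta>)"
  using Youngs_inequality_0[of \<theta> "1 - \<theta>" y 1] assms by (cases "y = 0") auto

lemma moment_nonneg: "0 \<le> (\<integral>x. \<bar>f x :: real\<bar> powr r \<partial>M)"
  by (rule integral_nonneg_AE) simp

lemma lpnorm_nonneg: "0 \<le> lpnorm M r f"
  by (simp add: lpnorm_def)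

lemma lpnorm_le_if_moment_le:
  assumes "0 < r" "(\<integral>x. \<bar>f x\<bar> powr r \<partial>M) \<le> K"
  shows "lpnorm M r f \<le> K powr (1 / r)"
  unfolding lpnorm_def using assms moment_nonneg by (intro powr_mono2) auto

lemma AE_zero_if_moment_zero:
  assumes "0 < r" "memLp M r f" "(\<integral>x. \<bar>f x\<bar> powr r \<partial>M) = 0"
  shows "AE x in M. f x = 0"
proof -
  have "AE x in M. \<bar>f x\<bar> powr r = 0"
    using assms unfolding memLp_def by (subst integral_nonneg_eq_0_iff_AE[symmetric]) auto
  then show ?thesis
    by eventually_elim simp
qed

lemma lpnorm_cong_AE:
  assumes "f \<in> borel_measurable M" "g \<in> borel_measurable M" "AE x in M. f x = g x"
  shows "lpnorm M r f = lpnorm M r g"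
  unfolding lpnorm_def using assms by (intro arg_cong[where f = "\<lambda>x. x powr (1 / r)"] integral_cong_AE) auto

lemma lpnorm_uminus: "lpnorm M r (\<lambda>x. - f x) = lpnorm M r f"
  by (simp add: lpnorm_def)

lemma memLp_uminus: "memLp M r f \<Longrightarrow> memLp M r (\<lambda>x. - f x)"
  by (simp add: memLp_def)

lemma memLp_add:
  fixes f g :: "'a \<Rightarrow> real"
  assumes "0 < r" and f: "memLp M r f" and g: "memLp M r g"
  shows "memLp M r (\<lambda>x. f x + g x)"
proof -
  have meas: "(\<lambda>x. f x + g x) \<in> borel_measurable M"
    using f g by (auto simp: memLp_def)
  have "integrable M (\<lambda>x. 2 powr r * (\<bar>f x\<bar> powr r + \<bar>g x\<bar> powr r))"
    using f g by (auto simp: memLp_def)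
  then have "integrable M (\<lambda>x. \<bar>f x + g x\<bar> powr r)"
    by (rule Bochner_Integration.integrable_bound)
       (use meas abs_add_powr_le[OF \<open>0 < r\<close>] in auto)
  with meas show ?thesis
    by (simp add: memLp_def)
qed

lemma memLp_diff:
  "0 < r \<Longrightarrow> memLp M r f \<Longrightarrow> memLp M r g \<Longrightarrow> memLp M r (\<lambda>x. f x - g x)"
  using memLp_add[of r M f "\<lambda>x. - g x"] memLp_uminus[of M r g] by simp

lemma memLp_mult:
  fixes f g :: "'a \<Rightarrow> real"
  assumes f: "memLp M (2 * r) f" and g: "memLp M (2 * r) g"
  shows "memLp M r (\<lambda>x. f x * g x)"
proof -
  have meas: "(\<lambda>x. f x * g x) \<in> borel_measurable M"
    using f g by (auto simp: memLp_def)
  have "integrable M (\<lambda>x. (\<bar>f x\<bar> powr (2 * r) + \<bar>g x\<bar> powr (2 * r)) / 2)"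
    using f g by (auto simp: memLp_def)
  then have "integrable M (\<lambda>x. \<bar>f x * g x\<bar> powr r)"
    by (rule Bochner_Integration.integrable_bound)
       (use meas abs_mult_powr_le_scaled[of 1 1] in \<open>auto intro: order_trans\<close>)
  with meas show ?thesis
    by (simp add: memLp_def)
qed

lemma lpnorm_add_le:
  fixes f g :: "'a \<Rightarrow> real"
  assumes r: "1 \<le> r" and f: "memLp M r f" and g: "memLp M r g"
  shows "lpnorm M r (\<lambda>x. f x + g x) \<le> lpnorm M r f + lpnorm M r g"
proof -
  define A where "A = (\<integral>x. \<bar>f x\<bar> powr r \<partial>M)"
  define B where "B = (\<integral>x. \<bar>g x\<bar> powr r \<partial>M)"
  have meas: "f \<in> borel_measurable M" "g \<in> borel_measurable M"
    using f g by (auto simp: memLp_def)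
  consider "A = 0" | "B = 0" | "0 < A" "0 < B"
    using moment_nonneg[where f=f and r=r and M=M] moment_nonneg[where f=g and r=r and M=M] unfolding A_def B_def by linarith
  then show ?thesis
  proof cases
    case 1
    then have "AE x in M. f x + g x = g x"
      using AE_zero_if_moment_zero[of r M f] r f by (auto simp: A_def)
    then show ?thesis
      using meas lpnorm_cong_AE[of "\<lambda>x. f x + g x" M g r] lpnorm_nonneg[of M r f] by simp
  next
    case 2
    then have "AE x in M. f x + g x = f x"
      using AE_zero_if_moment_zero[of r M g] r g by (auto simp: B_def)
    then show ?thesis
      using meas lpnorm_cong_AE[of "\<lambda>x. f x + g x" M f r] lpnorm_nonneg[of M r g] by simp
  next
    case 3
    define a where "a = A powr (1 / r)"
    define b where "b = B powr (1 / r)"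
    have ab: "0 < a" "0 < b" "a powr r = A" "b powr r = B"
      using 3 r by (auto simp: a_def b_def powr_powr)
    have pointwise: "\<bar>f x + g x\<bar> powr r
        \<le> (a + b) powr r * (a / (a + b) * (\<bar>f x\<bar> powr r / A) + b / (a + b) * (\<bar>g x\<bar> powr r / B))" for x
      using abs_add_powr_le_convex[OF r ab(1,2), of "f x" "g x"] ab by (simp add: powr_divide)
    have "(\<integral>x. \<bar>f x + g x\<bar> powr r \<partial>M)
        \<le> (\<integral>x. (a + b) powr r * (a / (a + b) * (\<bar>f x\<bar> powr r / A) + b / (a + b) * (\<bar>g x\<bar> powr r / B)) \<partial>M)"
      using memLp_add[of r M f g] r f g pointwise by (intro integral_mono) (auto simp: memLp_def)
    also have "\<dots> = (a + b) powr r"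
      using f g 3 ab by (simp add: memLp_def A_def B_def add_divide_distrib[symmetric])
    finally have "lpnorm M r (\<lambda>x. f x + g x) \<le> ((a + b) powr r) powr (1 / r)"
      using r by (intro lpnorm_le_if_moment_le) auto
    also have "\<dots> = lpnorm M r f + lpnorm M r g"
      using ab r by (simp add: powr_powr lpnorm_def a_def b_def A_def B_def)
    finally show ?thesis .
  qed
qed

lemma lpnorm_mult_le:
  fixes f g :: "'a \<Rightarrow> real"
  assumes r: "0 < r" and f: "memLp M (2 * r) f" and g: "memLp M (2 * r) g"
  shows "lpnorm M r (\<lambda>x. f x * g x) \<le> lpnorm M (2 * r) f * lpnorm M (2 * r) g"
proof -
  define A where "A = (\<integral>x. \<bar>f x\<bar> powr (2 * r) \<partial>M)"
  define B where "B = (\<integral>x. \<bar>g x\<bar> powr (2 * r) \<partial>M)"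
  have meas: "f \<in> borel_measurable M" "g \<in> borel_measurable M"
    using f g by (auto simp: memLp_def)
  have vanishing: "lpnorm M r (\<lambda>x. f x * g x) \<le> lpnorm M (2 * r) f * lpnorm M (2 * r) g"
    if "AE x in M. f x * g x = 0"
    using that meas lpnorm_cong_AE[of "\<lambda>x. f x * g x" M "\<lambda>x. 0" r] r
    by (simp add: lpnorm_def)
  consider "A = 0" | "B = 0" | "0 < A" "0 < B"
    using moment_nonneg[where f=f and r="2 * r" and M=M] moment_nonneg[where f=g and r="2 * r" and M=M]
    unfolding A_def B_def by linarith
  then show ?thesis
  proof cases
    case 1
    then have "AE x in M. f x = 0"
      using AE_zero_if_moment_zero[of "2 * r" M f] r f by (auto simp: A_def)
    then show ?thesis
      by (intro vanishing) (auto elim: AE_mp)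
  next
    case 2
    then have "AE x in M. g x = 0"
      using AE_zero_if_moment_zero[of "2 * r" M g] r g by (auto simp: B_def)
    then show ?thesis
      by (intro vanishing) (auto elim: AE_mp)
  next
    case 3
    define a where "a = sqrt A"
    define b where "b = sqrt B"
    have ab: "0 < a" "0 < b" "a\<^sup>2 = A" "b\<^sup>2 = B"
      using 3 by (auto simp: a_def b_def)
    have pointwise: "\<bar>f x * g x\<bar> powr r
        \<le> a * b * ((\<bar>f x\<bar> powr (2 * r) / A + \<bar>g x\<bar> powr (2 * r) / B) / 2)" for x
      using abs_mult_powr_le_scaled[OF ab(1,2), of "f x" "g x" r] ab by simp
    have "(\<integral>x. \<bar>f x * g x\<bar> powr r \<partial>M)
        \<le> (\<integral>x. a * b * ((\<bar>f x\<bar> powr (2 * r) / A + \<bar>g x\<bar> powr (2 * r) / B) / 2) \<partial>M)"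
      using memLp_mult[OF f g] f g pointwise by (intro integral_mono) (auto simp: memLp_def)
    also have "\<dots> = a * b"
      using f g 3 by (simp add: memLp_def A_def B_def)
    finally have "lpnorm M r (\<lambda>x. f x * g x) \<le> (a * b) powr (1 / r)"
      using r by (intro lpnorm_le_if_moment_le)
    also have "\<dots> = lpnorm M (2 * r) f * lpnorm M (2 * r) g"
      using 3 by (simp add: powr_mult a_def b_def lpnorm_def A_def B_def
          powr_half_sqrt[symmetric] powr_powr)
    finally show ?thesis .
  qed
qed

lemma memLp_mono_exponent:
  fixes f :: "'a \<Rightarrow> real"
  assumes "prob_space M" "0 < r" "r \<le> s" and f: "memLp M s f"
  shows "memLp M r f"
proof -
  interpret prob_space M by fact
  have meas: "f \<in> borel_measurable M"
    using f by (simp add: memLp_def)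
  have pointwise: "\<bar>f x\<bar> powr r \<le> \<bar>f x\<bar> powr s + 1" for x
  proof (cases "\<bar>f x\<bar> \<le> 1")
    case True
    then have "\<bar>f x\<bar> powr r \<le> 1"
      using assms by (intro powr_le1) auto
    then show ?thesis
      by (simp add: add_increasing)
  next
    case False
    then have "\<bar>f x\<bar> powr r \<le> \<bar>f x\<bar> powr s"
      using assms by (intro powr_mono) auto
    then show ?thesis
      by simp
  qed
  have "integrable M (\<lambda>x. \<bar>f x\<bar> powr s + 1)"
    using f by (simp add: memLp_def)
  then have "integrable M (\<lambda>x. \<bar>f x\<bar> powr r)"
    by (rule Bochner_Integration.integrable_bound) (use meas pointwise in \<open>auto intro: order_trans\<close>)
  with meas show ?thesis
    by (simp add: memLp_def)
qed

lemma lpnorm_mono_exponent: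
  fixes f :: "'a \<Rightarrow> real"
  assumes "prob_space M" and r: "0 < r" "r \<le> s" and f: "memLp M s f"
  shows "lpnorm M r f \<le> lpnorm M s f"
proof -
  interpret prob_space M by fact
  define B where "B = (\<integral>x. \<bar>f x\<bar> powr s \<partial>M)"
  have meas: "f \<in> borel_measurable M"
    using f by (simp add: memLp_def)
  consider "B = 0" | "0 < B"
    using moment_nonneg[where f=f and r=s and M=M] unfolding B_def by linarith
  then show ?thesis
  proof cases
    case 1
    then have "AE x in M. f x = 0"
      using AE_zero_if_moment_zero[of s M f] r f by (simp add: B_def)
    then have "lpnorm M r f = lpnorm M r (\<lambda>x. 0)"
      using meas by (intro lpnorm_cong_AE) auto
    then show ?thesis
      using r by (simp add: lpnorm_def lpnorm_nonneg)
  next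
    case 2
    define \<theta> where "\<theta> = r / s"
    have \<theta>: "0 < \<theta>" "\<theta> \<le> 1"
      using r by (auto simp: \<theta>_def)
    have pointwise: "\<bar>f x\<bar> powr r \<le> B powr \<theta> * (\<theta> * (\<bar>f x\<bar> powr s / B) + (1 - \<theta>))" for x
    proof -
      have "\<bar>f x\<bar> powr r = B powr \<theta> * (\<bar>f x\<bar> powr s / B) powr \<theta>"
        using 2 r by (simp add: powr_divide powr_powr \<theta>_def)
      then show ?thesis
        using powr_le_tangent_at_1[OF \<theta>, of "\<bar>f x\<bar> powr s / B"] 2 by (simp add: mult_left_mono)
    qed
    have "(\<integral>x. \<bar>f x\<bar> powr r \<partial>M) \<le> (\<integral>x. B powr \<theta> * (\<theta> * (\<bar>f x\<bar> powr s / B) + (1 - \<theta>)) \<partial>M)"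
      using memLp_mono_exponent[OF \<open>prob_space M\<close> r f] f pointwise
      by (intro integral_mono) (auto simp: memLp_def)
    also have "\<dots> = B powr \<theta>"
      using f 2 by (simp add: memLp_def B_def prob_space)
    finally have "lpnorm M r f \<le> (B powr \<theta>) powr (1 / r)"
      using r by (intro lpnorm_le_if_moment_le) auto
    also have "\<dots> = lpnorm M s f"
      using r by (simp add: powr_powr \<theta>_def lpnorm_def B_def)
    finally show ?thesis .
  qed
qed

lemma
  fixes f :: "'b \<Rightarrow> real"
  assumes "\<phi> \<in> measurable M N" and "f \<in> borel_measurable N"
  shows memLp_distr_iff: "memLp (distr M N \<phi>) r f \<longleftrightarrow> memLp M r (\<lambda>x. f (\<phi> x))"
    and lpnorm_distr: "lpnorm (distr M N \<phi>) r f = lpnorm M r (\<lambda>x. f (\<phi> x))"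
  using assms by (simp_all add: memLp_def lpnorm_def integrable_distr_eq integral_distr)


section \<open>Laws of i.i.d. innovation sequences\<close>

lemma prob_space_seqlaw: "prob_space \<mu> \<Longrightarrow> prob_space (seqlaw \<mu>)"
  unfolding seqlaw_def by (rule prob_space_PiM)

lemma measurable_seqlaw:
  "(\<And>m. (\<lambda>x. f x m) \<in> measurable N \<mu>) \<Longrightarrow> f \<in> measurable N (seqlaw \<mu>)"
proof -
  assume "\<And>m. (\<lambda>x. f x m) \<in> measurable N \<mu>"
  then have "(\<lambda>x. \<lambda>m\<in>UNIV. f x m) \<in> measurable N (seqlaw \<mu>)"
    unfolding seqlaw_def by (rule measurable_restrict)
  then show ?thesis
    by (simp add: restrict_UNIV)
qed

lemma measurable_seqlaw_fun_upd:
  "(\<lambda>z. (fst z)(s := snd z)) \<in> measurable (seqlaw \<mu> \<Otimes>\<^sub>M \<mu>) (seqlaw \<mu>)"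
  by (rule measurable_seqlaw) (simp add: seqlaw_def)

lemma distr_seqlaw_fun_upd:
  assumes "prob_space \<mu>"
  shows "distr (seqlaw \<mu> \<Otimes>\<^sub>M \<mu>) (seqlaw \<mu>) (\<lambda>z. (fst z)(s := snd z)) = seqlaw \<mu>"
proof -
  interpret prob_space \<mu> by fact
  interpret S: prob_space "seqlaw \<mu>"
    using assms by (rule prob_space_seqlaw)
  interpret pair_sigma_finite "seqlaw \<mu>" \<mu> ..
  have "distr (seqlaw \<mu> \<Otimes>\<^sub>M \<mu>) (seqlaw \<mu>) (\<lambda>z. (fst z)(s := snd z))
      = distr (\<mu> \<Otimes>\<^sub>M seqlaw \<mu>) (seqlaw \<mu>) ((\<lambda>z. (fst z)(s := snd z)) \<circ> (\<lambda>(x, y). (y, x)))"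
    by (subst distr_pair_swap) (intro distr_distr measurable_seqlaw_fun_upd measurable_pair_swap')
  also have "\<dots> = distr (\<mu> \<Otimes>\<^sub>M seqlaw \<mu>) (seqlaw \<mu>) (\<lambda>(x, X). X(s := x))"
    by (simp add: comp_def case_prod_beta')
  also have "\<dots> = seqlaw \<mu>"
    using distr_pair_PiM_eq_PiM[of UNIV "\<lambda>_. \<mu>" s] assms by (simp add: seqlaw_def)
  finally show ?thesis .
qed

lemma measurable_seqlaw_shift: "(\<lambda>y m. y (Suc m)) \<in> measurable (seqlaw \<mu>) (seqlaw \<mu>)"
  by (rule measurable_seqlaw) (simp add: seqlaw_def)

lemma distr_seqlaw_shift:
  "prob_space \<mu> \<Longrightarrow> distr (seqlaw \<mu>) (seqlaw \<mu>) (\<lambda>y m. y (Suc m)) = seqlaw \<mu>"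
  using distr_PiM_reindex[of UNIV "\<lambda>_. \<mu>" Suc UNIV] by (simp add: seqlaw_def restrict_UNIV)

lemma measurable_seqlaw_map:
  "\<pi> \<in> measurable \<mu> T \<Longrightarrow> (\<lambda>y m. \<pi> (y m)) \<in> measurable (seqlaw \<mu>) (seqlaw T)"
  by (rule measurable_seqlaw) (simp add: seqlaw_def)

lemma distr_seqlaw_component:
  "prob_space \<mu> \<Longrightarrow> distr (seqlaw \<mu>) \<mu> (\<lambda>y. y m) = \<mu>"
  using distr_PiM_component[of UNIV "\<lambda>_. \<mu>" m] by (simp add: seqlaw_def)

lemma distr_seqlaw_map:
  assumes "prob_space \<mu>" and \<pi>: "\<pi> \<in> measurable \<mu> T"
  shows "distr (seqlaw \<mu>) (seqlaw T) (\<lambda>y m. \<pi> (y m)) = seqlaw (distr \<mu> T \<pi>)"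
proof -
  interpret S: prob_space "seqlaw \<mu>"
    using assms(1) by (rule prob_space_seqlaw)
  have coordinate: "(\<lambda>y. y m) \<in> measurable (seqlaw \<mu>) \<mu>" for m
    by (simp add: seqlaw_def)
  \<comment> \<open>The coordinates are independent, hence so are their images under \<open>\<pi>\<close>, and the joint law
    of independent variables is the product of their laws.\<close>
  have "distr (seqlaw \<mu>) (seqlaw \<mu>) (\<lambda>y. \<lambda>m\<in>UNIV. y m) = seqlaw \<mu>"
    by (simp add: restrict_UNIV distr_id2 cong: distr_cong)
  then have "S.indep_vars (\<lambda>_. \<mu>) (\<lambda>m y. y m) UNIV"
    using S.indep_vars_iff_distr_eq_PiM[where I = UNIV and M' = "\<lambda>_. \<mu>" and X = "\<lambda>m y. y m"] coordinate
    by (simp add: distr_seqlaw_component[OF assms(1), unfolded seqlaw_def] seqlaw_def)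
  then have "S.indep_vars (\<lambda>_. T) (\<lambda>m y. \<pi> (y m)) UNIV"
    using \<pi> by (rule S.indep_vars_compose2)
  then have "distr (seqlaw \<mu>) (seqlaw T) (\<lambda>y. \<lambda>m\<in>UNIV. \<pi> (y m))
      = PiM UNIV (\<lambda>m. distr (seqlaw \<mu>) T (\<lambda>y. \<pi> (y m)))"
    using S.indep_vars_iff_distr_eq_PiM[where I = UNIV and M' = "\<lambda>_. T" and X = "\<lambda>m y. \<pi> (y m)"] coordinate \<pi>
    by (simp add: seqlaw_def)
  moreover have "distr (seqlaw \<mu>) T (\<lambda>y. \<pi> (y m)) = distr \<mu> T \<pi>" for m
    using distr_distr[OF \<pi> coordinate[of m]] by (simp add: comp_def distr_seqlaw_component[OF assms(1)])
  ultimately show ?thesis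
    by (simp add: restrict_UNIV seqlaw_def)
qed


section \<open>Physical dependence of increments and their products\<close>

lemma pdm_nonneg: "0 \<le> pdm \<mu> r u s"
  by (simp add: pdm_def lpnorm_nonneg)

lemma
  assumes "prob_space \<mu>" and "u \<in> borel_measurable (seqlaw \<mu>)"
  shows memLp_coupled_fst_iff:
      "memLp (seqlaw \<mu> \<Otimes>\<^sub>M \<mu>) r (\<lambda>z. u (fst z)) \<longleftrightarrow> memLp (seqlaw \<mu>) r u"
    and lpnorm_coupled_fst:
      "lpnorm (seqlaw \<mu> \<Otimes>\<^sub>M \<mu>) r (\<lambda>z. u (fst z)) = lpnorm (seqlaw \<mu>) r u"
    and memLp_coupled_fun_upd_iff:
      "memLp (seqlaw \<mu> \<Otimes>\<^sub>M \<mu>) r (\<lambda>z. u ((fst z)(s := snd z))) \<longleftrightarrow> memLp (seqlaw \<mu>) r u"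
    and lpnorm_coupled_fun_upd:
      "lpnorm (seqlaw \<mu> \<Otimes>\<^sub>M \<mu>) r (\<lambda>z. u ((fst z)(s := snd z))) = lpnorm (seqlaw \<mu>) r u"
  using memLp_distr_iff[OF measurable_fst[of "seqlaw \<mu>" \<mu>] assms(2)]
    lpnorm_distr[OF measurable_fst[of "seqlaw \<mu>" \<mu>] assms(2)]
    memLp_distr_iff[OF measurable_seqlaw_fun_upd assms(2)] lpnorm_distr[OF measurable_seqlaw_fun_upd assms(2)]
  by (simp_all add: prob_space.distr_pair_fst[OF assms(1)] distr_seqlaw_fun_upd[OF assms(1)])

lemma memLp_coupled_difference:
  assumes "prob_space \<mu>" "0 < r" "memLp (seqlaw \<mu>) r u"
  shows "memLp (seqlaw \<mu> \<Otimes>\<^sub>M \<mu>) r (\<lambda>z. u (fst z) - u ((fst z)(s := snd z)))"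
  using assms memLp_coupled_fst_iff[OF assms(1)] memLp_coupled_fun_upd_iff[OF assms(1)]
  by (intro memLp_diff) (auto simp: memLp_def)

lemma pdm_mono_exponent:
  assumes "prob_space \<mu>" "0 < r" "r \<le> r'" "memLp (seqlaw \<mu>) r' u"
  shows "pdm \<mu> r u s \<le> pdm \<mu> r' u s"
  unfolding pdm_def using assms
  by (intro lpnorm_mono_exponent prob_space_pair prob_space_seqlaw memLp_coupled_difference) auto

lemma pdm_diff_le:
  assumes "prob_space \<mu>" "1 \<le> r" "memLp (seqlaw \<mu>) r u" "memLp (seqlaw \<mu>) r v"
  shows "pdm \<mu> r (\<lambda>y. u y - v y) s \<le> pdm \<mu> r u s + pdm \<mu> r v s"
proof -
  let ?D = "\<lambda>w z. w (fst z) - w ((fst z)(s := snd z))"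
  have "pdm \<mu> r (\<lambda>y. u y - v y) s = lpnorm (seqlaw \<mu> \<Otimes>\<^sub>M \<mu>) r (\<lambda>z. ?D u z + - ?D v z)"
    unfolding pdm_def by (rule arg_cong[where f = "lpnorm _ r"]) (auto simp: fun_eq_iff)
  also have "\<dots> \<le> lpnorm (seqlaw \<mu> \<Otimes>\<^sub>M \<mu>) r (?D u) + lpnorm (seqlaw \<mu> \<Otimes>\<^sub>M \<mu>) r (\<lambda>z. - ?D v z)"
    using assms by (intro lpnorm_add_le memLp_uminus memLp_coupled_difference) auto
  finally show ?thesis
    unfolding lpnorm_uminus by (simp only: pdm_def)
qed

lemma pdm_mult_le:
  assumes P: "prob_space \<mu>" and p: "1 \<le> p"
    and u: "memLp (seqlaw \<mu>) (2 * p) u" and v: "memLp (seqlaw \<mu>) (2 * p) v"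
  shows "pdm \<mu> p (\<lambda>y. u y * v y) s
    \<le> lpnorm (seqlaw \<mu>) (2 * p) v * pdm \<mu> (2 * p) u s + lpnorm (seqlaw \<mu>) (2 * p) u * pdm \<mu> (2 * p) v s"
proof -
  let ?Q = "seqlaw \<mu> \<Otimes>\<^sub>M \<mu>"
  let ?D = "\<lambda>w z. w (fst z) - w ((fst z)(s := snd z))"
  have meas: "u \<in> borel_measurable (seqlaw \<mu>)" "v \<in> borel_measurable (seqlaw \<mu>)"
    using u v by (auto simp: memLp_def)
  have u_fst: "memLp ?Q (2 * p) (\<lambda>z. u (fst z))"
    using u memLp_coupled_fst_iff[OF P meas(1)] by simp
  have v_upd: "memLp ?Q (2 * p) (\<lambda>z. v ((fst z)(s := snd z)))"
    using v memLp_coupled_fun_upd_iff[OF P meas(2)] by simp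
  have Du: "memLp ?Q (2 * p) (?D u)" and Dv: "memLp ?Q (2 * p) (?D v)"
    using P p u v by (auto intro: memLp_coupled_difference)
  have "pdm \<mu> p (\<lambda>y. u y * v y) s
      = lpnorm ?Q p (\<lambda>z. u (fst z) * ?D v z + v ((fst z)(s := snd z)) * ?D u z)"
    by (simp add: pdm_def algebra_simps)
  also have "\<dots> \<le> lpnorm ?Q p (\<lambda>z. u (fst z) * ?D v z) + lpnorm ?Q p (\<lambda>z. v ((fst z)(s := snd z)) * ?D u z)"
    using p u_fst v_upd Du Dv by (intro lpnorm_add_le memLp_mult) auto
  also have "\<dots> \<le> lpnorm ?Q (2 * p) (\<lambda>z. u (fst z)) * lpnorm ?Q (2 * p) (?D v)
      + lpnorm ?Q (2 * p) (\<lambda>z. v ((fst z)(s := snd z))) * lpnorm ?Q (2 * p) (?D u)"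
    using p u_fst v_upd Du Dv by (intro add_mono lpnorm_mult_le) auto
  finally show ?thesis
    by (simp add: lpnorm_coupled_fst[OF P meas(1)] lpnorm_coupled_fun_upd[OF P meas(2)] pdm_def add.commute)
qed

lemma pdm_shift_0: "pdm \<mu> r (\<lambda>y. u (\<lambda>m. y (Suc m))) 0 = 0"
  by (simp add: pdm_def lpnorm_def)

lemma pdm_shift_Suc:
  fixes \<mu> :: "'a measure"
  assumes P: "prob_space \<mu>" and u: "u \<in> borel_measurable (seqlaw \<mu>)"
  shows "pdm \<mu> r (\<lambda>y. u (\<lambda>m. y (Suc m))) (Suc s) = pdm \<mu> r u s"
proof -
  interpret prob_space \<mu> by fact
  let ?Q = "seqlaw \<mu> \<Otimes>\<^sub>M \<mu>"
  let ?shift = "\<lambda>(x :: nat \<Rightarrow> 'a, a :: 'a). (\<lambda>m. x (Suc m), a)"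
  let ?D = "\<lambda>z. u (fst z) - u ((fst z)(s := snd z))"
  have shift_meas: "?shift \<in> measurable ?Q ?Q"
    using measurable_seqlaw_shift[of \<mu>] by measurable
  have "distr ?Q ?Q ?shift = distr (seqlaw \<mu>) (seqlaw \<mu>) (\<lambda>y m. y (Suc m)) \<Otimes>\<^sub>M distr \<mu> \<mu> (\<lambda>a. a)"
    by (rule pair_measure_distr[OF measurable_seqlaw_shift measurable_ident_sets, symmetric])
       (simp_all add: sigma_finite_measure_axioms)
  then have "distr ?Q ?Q ?shift = ?Q"
    by (simp add: distr_seqlaw_shift[OF P])
  then have "pdm \<mu> r u s = lpnorm ?Q r (\<lambda>z. ?D (?shift z))"
    using lpnorm_distr[OF shift_meas, of ?D r] u measurable_seqlaw_fun_upd[of s \<mu>]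
    by (simp add: pdm_def)
  also have "(\<lambda>z. ?D (?shift z)) = (\<lambda>z. u (\<lambda>m. fst z (Suc m)) - u (\<lambda>m. ((fst z)(Suc s := snd z)) (Suc m)))"
    by (auto simp: fun_eq_iff case_prod_beta intro!: arg_cong[where f = u])
  finally show ?thesis
    by (simp add: pdm_def)
qed

lemma pdm_seqlaw_map:
  fixes \<mu> :: "'a measure" and T :: "'b measure"
  assumes P: "prob_space \<mu>" and \<pi>: "\<pi> \<in> measurable \<mu> T" and u: "u \<in> borel_measurable (seqlaw T)"
  shows "pdm \<mu> r (\<lambda>y. u (\<lambda>m. \<pi> (y m))) s = pdm (distr \<mu> T \<pi>) r u s"
proof -
  interpret prob_space \<mu> by fact
  let ?Q = "seqlaw \<mu> \<Otimes>\<^sub>M \<mu>"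
  let ?map = "\<lambda>(x :: nat \<Rightarrow> 'a, a :: 'a). (\<lambda>m. \<pi> (x m), \<pi> a)"
  let ?D = "\<lambda>z. u (fst z) - u ((fst z)(s := snd z))"
  have map_meas: "?map \<in> measurable ?Q (seqlaw T \<Otimes>\<^sub>M T)"
    using measurable_seqlaw_map[OF \<pi>] \<pi> by measurable
  have "distr ?Q (seqlaw T \<Otimes>\<^sub>M T) ?map
      = distr (seqlaw \<mu>) (seqlaw T) (\<lambda>y m. \<pi> (y m)) \<Otimes>\<^sub>M distr \<mu> T \<pi>"
    by (rule pair_measure_distr[OF measurable_seqlaw_map[OF \<pi>] \<pi>, symmetric])
       (use prob_space_distr[OF \<pi>] in \<open>simp add: prob_space_imp_sigma_finite\<close>)
  then have "distr ?Q (seqlaw T \<Otimes>\<^sub>M T) ?map = seqlaw (distr \<mu> T \<pi>) \<Otimes>\<^sub>M distr \<mu> T \<pi>"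
    by (simp add: distr_seqlaw_map[OF P \<pi>])
  then have "pdm (distr \<mu> T \<pi>) r u s = lpnorm ?Q r (\<lambda>z. ?D (?map z))"
    using lpnorm_distr[OF map_meas, of ?D r] u measurable_seqlaw_fun_upd[of s T]
    by (simp add: pdm_def)
  also have "(\<lambda>z. ?D (?map z)) = (\<lambda>z. u (\<lambda>m. \<pi> (fst z m)) - u (\<lambda>m. \<pi> (((fst z)(s := snd z)) m)))"
    by (auto simp: fun_eq_iff case_prod_beta intro!: arg_cong[where f = u])
  finally show ?thesis
    by (simp add: pdm_def)
qed

text \<open>Since \<open>y m\<close> is the innovation at time \<open>t - m\<close>, \<open>increment f \<pi> y\<close> is the first difference
  \<open>f(\<F>\<^sub>t) - f(\<F>\<^sub>t\<^sub>-\<^sub>1)\<close> of the process \<open>f\<close> observed through the coordinate map \<open>\<pi>\<close>.\<close>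

definition increment :: "((nat \<Rightarrow> 'b) \<Rightarrow> real) \<Rightarrow> ('a \<Rightarrow> 'b) \<Rightarrow> (nat \<Rightarrow> 'a) \<Rightarrow> real" where
  "increment f \<pi> y = f (\<lambda>m. \<pi> (y m)) - f (\<lambda>m. \<pi> (y (Suc m)))"

lemma
  fixes \<mu> :: "'a measure" and T :: "'b measure"
  assumes P: "prob_space \<mu>" and \<pi>: "\<pi> \<in> measurable \<mu> T"
    and f: "memLp (seqlaw (distr \<mu> T \<pi>)) r f" and p: "1 \<le> p" "p \<le> r"
  shows memLp_increment: "memLp (seqlaw \<mu>) p (increment f \<pi>)"
    and pdm_increment_le:
      "pdm \<mu> p (increment f \<pi>) s \<le> pdm (distr \<mu> T \<pi>) r f s + pdm (distr \<mu> T \<pi>) r f (s - 1)"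
      (is "?pdm \<le> ?bound")
proof -
  have "f \<in> borel_measurable (seqlaw (distr \<mu> T \<pi>))"
    using f by (simp add: memLp_def)
  then have f_meas: "f \<in> borel_measurable (seqlaw T)"
    by (simp add: seqlaw_def cong: measurable_cong_sets)
  define U where "U = (\<lambda>y. f (\<lambda>m. \<pi> (y m)))"
  have U: "memLp (seqlaw \<mu>) r U"
    using f memLp_distr_iff[OF measurable_seqlaw_map[OF \<pi>] f_meas]
    by (simp add: distr_seqlaw_map[OF P \<pi>] U_def)
  then have U_meas: "U \<in> borel_measurable (seqlaw \<mu>)"
    by (simp add: memLp_def)
  have U_shift: "memLp (seqlaw \<mu>) r (\<lambda>y. U (\<lambda>m. y (Suc m)))"
    using U memLp_distr_iff[OF measurable_seqlaw_shift U_meas] by (simp add: distr_seqlaw_shift[OF P])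
  have increment_eq: "increment f \<pi> = (\<lambda>y. U y - U (\<lambda>m. y (Suc m)))"
    by (simp add: fun_eq_iff increment_def U_def)
  have Up: "memLp (seqlaw \<mu>) p U" and U_shift_p: "memLp (seqlaw \<mu>) p (\<lambda>y. U (\<lambda>m. y (Suc m)))"
    using U U_shift p by (auto intro: memLp_mono_exponent prob_space_seqlaw[OF P])
  then show "memLp (seqlaw \<mu>) p (increment f \<pi>)"
    unfolding increment_eq using p by (intro memLp_diff) auto
  have U_pdm: "pdm \<mu> p U s' \<le> pdm (distr \<mu> T \<pi>) r f s'" for s'
    using pdm_mono_exponent[OF P _ p(2) U] pdm_seqlaw_map[OF P \<pi> f_meas] p by (simp add: U_def)
  \<comment> \<open>at \<open>s = 0\<close> the shifted term vanishes, so the truncated \<open>s - 1\<close> is harmless\<close>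
  have "pdm \<mu> p (\<lambda>y. U (\<lambda>m. y (Suc m))) s \<le> pdm (distr \<mu> T \<pi>) r f (s - 1)"
    using U_pdm pdm_nonneg by (cases s) (auto simp: pdm_shift_0 pdm_shift_Suc[OF P U_meas])
  then show "?pdm \<le> ?bound"
    unfolding increment_eq using pdm_diff_le[OF P p(1) Up U_shift_p, of s] U_pdm[of s] by simp
qed

lemma
  fixes \<mu> :: "'a measure"
  assumes P: "prob_space \<mu>" and p: "1 \<le> p"
    and \<pi>1: "\<pi>1 \<in> measurable \<mu> T1" and f1: "memLp (seqlaw (distr \<mu> T1 \<pi>1)) r1 f1" and r1: "2 * p \<le> r1"
    and \<pi>2: "\<pi>2 \<in> measurable \<mu> T2" and f2: "memLp (seqlaw (distr \<mu> T2 \<pi>2)) r2 f2" and r2: "2 * p \<le> r2"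
  shows memLp_increment_mult: "memLp (seqlaw \<mu>) p (\<lambda>y. increment f1 \<pi>1 y * increment f2 \<pi>2 y)"
    and pdm_increment_mult_le: "pdm \<mu> p (\<lambda>y. increment f1 \<pi>1 y * increment f2 \<pi>2 y) s
      \<le> lpnorm (seqlaw \<mu>) (2 * p) (increment f2 \<pi>2)
          * (pdm (distr \<mu> T1 \<pi>1) r1 f1 s + pdm (distr \<mu> T1 \<pi>1) r1 f1 (s - 1))
        + lpnorm (seqlaw \<mu>) (2 * p) (increment f1 \<pi>1)
          * (pdm (distr \<mu> T2 \<pi>2) r2 f2 s + pdm (distr \<mu> T2 \<pi>2) r2 f2 (s - 1))"
      (is "?pdm \<le> ?bound")
proof -
  have 1: "memLp (seqlaw \<mu>) (2 * p) (increment f1 \<pi>1)"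
    and 2: "memLp (seqlaw \<mu>) (2 * p) (increment f2 \<pi>2)"
    using p r1 r2 by (auto intro: memLp_increment[OF P \<pi>1 f1] memLp_increment[OF P \<pi>2 f2])
  then show "memLp (seqlaw \<mu>) p (\<lambda>y. increment f1 \<pi>1 y * increment f2 \<pi>2 y)"
    by (rule memLp_mult)
  show "?pdm \<le> ?bound"
    using p r1 r2
    by (intro order_trans[OF pdm_mult_le[OF P p 1 2]] add_mono mult_left_mono lpnorm_nonneg
        pdm_increment_le[OF P \<pi>1 f1] pdm_increment_le[OF P \<pi>2 f2]) auto
qed


section \<open>Tail sums of dependence measures\<close>

lemma bigo_drop_ln_powr:
  fixes T :: "nat \<Rightarrow> real"
  assumes "T \<in> O(\<lambda>t. real t powr -\<gamma> * ln (real t) powr -A)" and "0 \<le> A"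
  shows "T \<in> O(\<lambda>t. real t powr -\<gamma>)"
proof -
  have "ln (real t) powr -A \<le> 1" if "3 \<le> t" for t
  proof -
    have "exp 1 \<le> real t"
      using exp_le that by linarith
    then have "1 \<le> ln (real t)"
      using ln_exp[of 1] ln_le_cancel_iff[of "exp 1" "real t"] that by auto
    then show ?thesis
      using \<open>0 \<le> A\<close> by (simp add: powr_minus ge_one_powr_ge_zero divide_simps)
  qed
  then have "(\<lambda>t. real t powr -\<gamma> * ln (real t) powr -A) \<in> O(\<lambda>t. real t powr -\<gamma>)"
    by (intro landau_o.big_mono eventually_mono[OF eventually_ge_at_top[of 3]])
       (auto simp: abs_mult mult_left_le)
  with assms(1) show ?thesis
    by (rule landau_o.big_trans)
qed

lemma bigo_powr_lag:
  fixes T :: "nat \<Rightarrow> real"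
  assumes "T \<in> O(\<lambda>t. real t powr -b)"
  shows "(\<lambda>t. T (t - 1)) \<in> O(\<lambda>t. real t powr -b)"
proof -
  have "(\<lambda>t. T (t - 1)) \<in> O(\<lambda>t. real (t - 1) powr -b)"
    using assms filterlim_minus_const_nat_at_top by (rule landau_o.big.compose)
  also have "(\<lambda>t. real (Suc t - 1) / real (Suc t)) \<longlonglongrightarrow> 1"
    using LIMSEQ_n_over_Suc_n by simp
  then have "(\<lambda>t. real (t - 1) / real t) \<longlonglongrightarrow> 1"
    by (rule filterlim_sequentially_Suc[THEN iffD1])
  then have "(\<lambda>t. real (t - 1)) \<sim>[sequentially] (\<lambda>t. real t)"
    by (rule asymp_equivI')
  then have "(\<lambda>t. real (t - 1) powr -b) \<in> O(\<lambda>t. real t powr -b)"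
    by (intro asymp_equiv_imp_bigo asymp_equiv_powr_real) auto
  finally show ?thesis .
qed

lemma bigo_powr_mono_exponent:
  "b' \<le> b \<Longrightarrow> (\<lambda>t::nat. real t powr -b) \<in> O(\<lambda>t. real t powr -b')"
  by (intro landau_o.big_mono eventually_mono[OF eventually_ge_at_top[of 1]]) (auto intro: powr_mono)

lemma summable_lag:
  fixes D :: "nat \<Rightarrow> 'a::real_normed_vector"
  shows "summable D \<Longrightarrow> summable (\<lambda>s. D (s - 1))"
  using summable_Suc_iff[of "\<lambda>s. D (s - 1)"] by simp

lemma bigo_powr_lag_combination:
  fixes R1 R2 :: "nat \<Rightarrow> real"
  assumes "R1 \<in> O(\<lambda>t. real t powr -b1)" and "R2 \<in> O(\<lambda>t. real t powr -b2)"
  shows "(\<lambda>t. C1 * (R1 t + R1 (t - 1)) + C2 * (R2 t + R2 (t - 1))) \<in> O(\<lambda>t. real t powr - min b1 b2)"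
proof -
  let ?O = "O(\<lambda>t. real t powr - min b1 b2)"
  have "R1 \<in> ?O" "R2 \<in> ?O"
    using landau_o.big_trans[OF assms(1) bigo_powr_mono_exponent[of "min b1 b2" b1]]
      landau_o.big_trans[OF assms(2) bigo_powr_mono_exponent[of "min b1 b2" b2]]
    by simp_all
  moreover have "(\<lambda>t. c * g t) \<in> ?O" if "g \<in> ?O" for c and g :: "nat \<Rightarrow> real"
    using landau_o.big.mult[OF bigo_const[of c] that] by simp
  moreover have "(\<lambda>t. R t + R (t - 1)) \<in> ?O" if "R \<in> ?O" for R :: "nat \<Rightarrow> real"
    using that bigo_powr_lag[OF that] by (rule sum_in_bigo(1))
  ultimately show ?thesis
    by (intro sum_in_bigo(1)) blast+
qed

lemma
  fixes \<delta> D1 D2 :: "nat \<Rightarrow> real"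
  assumes \<delta>: "\<And>s. 0 \<le> \<delta> s" and D1: "summable D1" and D2: "summable D2"
    and bound: "\<And>s. \<delta> s \<le> C1 * (D1 s + D1 (s - 1)) + C2 * (D2 s + D2 (s - 1))"
    and tail1: "(\<lambda>t. \<Sum>s. D1 (s + t)) \<in> O(\<lambda>t. real t powr -b1)"
    and tail2: "(\<lambda>t. \<Sum>s. D2 (s + t)) \<in> O(\<lambda>t. real t powr -b2)"
  shows summable_if_dominated: "summable \<delta>"
    and tail_bigo_if_dominated: "(\<lambda>t. \<Sum>s. \<delta> (s + t)) \<in> O(\<lambda>t. real t powr - min b1 b2)"
proof -
  define B where "B s = C1 * (D1 s + D1 (s - 1)) + C2 * (D2 s + D2 (s - 1))" for s
  define R1 where "R1 = (\<lambda>t. \<Sum>s. D1 (s + t))"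
  define R2 where "R2 = (\<lambda>t. \<Sum>s. D2 (s + t))"
  have \<delta>_B: "\<delta> s \<le> B s" for s
    using bound by (simp add: B_def)
  have B: "summable B"
    unfolding B_def using D1 D2 by (intro summable_add summable_mult summable_lag)
  then show summable: "summable \<delta>"
    using \<delta> \<delta>_B by (intro summable_comparison_test[OF _ B]) auto
  have tail_le: "norm (\<Sum>s. \<delta> (s + t)) \<le> norm (C1 * (R1 t + R1 (t - 1)) + C2 * (R2 t + R2 (t - 1)))"
    if "1 \<le> t" for t
  proof -
    have shift: "s + t - 1 = s + (t - 1)" for s
      using that by simp
    have "summable (\<lambda>s. D (s + t))" "summable (\<lambda>s. D (s + t - 1))" if "summable D" for D :: "nat \<Rightarrow> real"
      using that unfolding shift by (auto intro: summable_ignore_initial_segment)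
    note tails = this[OF D1] this[OF D2]
    have "0 \<le> (\<Sum>s. \<delta> (s + t))"
      using \<delta> summable by (intro suminf_nonneg summable_ignore_initial_segment) auto
    moreover have "(\<Sum>s. \<delta> (s + t)) \<le> (\<Sum>s. B (s + t))"
      using summable B \<delta>_B by (intro suminf_le summable_ignore_initial_segment) auto
    moreover have "(\<Sum>s. B (s + t)) = C1 * (R1 t + R1 (t - 1)) + C2 * (R2 t + R2 (t - 1))"
      using tails
      by (simp add: B_def R1_def R2_def shift[simplified] suminf_mult summable_add summable_mult
          flip: suminf_add)
    ultimately show ?thesis
      by simp
  qed
  have "(\<lambda>t. \<Sum>s. \<delta> (s + t)) \<in> O(\<lambda>t. C1 * (R1 t + R1 (t - 1)) + C2 * (R2 t + R2 (t - 1)))"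
    using tail_le by (intro landau_o.big_mono eventually_mono[OF eventually_ge_at_top[of 1]])
  also have "(\<lambda>t. C1 * (R1 t + R1 (t - 1)) + C2 * (R2 t + R2 (t - 1))) \<in> O(\<lambda>t. real t powr - min b1 b2)"
    using tail1 tail2 unfolding R1_def R2_def by (rule bigo_powr_lag_combination)
  finally show "(\<lambda>t. \<Sum>s. \<delta> (s + t)) \<in> O(\<lambda>t. real t powr - min b1 b2)" .
qed

lemma gamma_gt_half:
  fixes q :: real
  assumes "4 < q"
  shows "1 / 2 < (q\<^sup>2 - 4 + (q - 2) * sqrt (q\<^sup>2 + 20 * q + 4)) / (8 * q)"
proof -
  have "q \<le> sqrt (q\<^sup>2 + 20 * q + 4)"
    using assms real_sqrt_le_mono[of "q\<^sup>2" "q\<^sup>2 + 20 * q + 4"] by simp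
  then have "(q - 2) * q \<le> (q - 2) * sqrt (q\<^sup>2 + 20 * q + 4)"
    using assms by (intro mult_left_mono) auto
  moreover have "4 * q < q\<^sup>2 - 4 + (q - 2) * q"
  proof -
    have "4 * q < q * q"
      using assms by (intro mult_strict_right_mono) auto
    moreover have "q\<^sup>2 = q * q" "(q - 2) * q = q * q - 2 * q"
      by (simp_all add: power2_eq_square algebra_simps)
    ultimately show ?thesis
      using assms by linarith
  qed
  ultimately show ?thesis
    using assms by (simp add: field_simps)
qed

lemma half_minus_inverse_less:
  fixes p r b :: real
  assumes "0 < p" "p \<le> r" "1 / 2 - 1 / r < b"
  shows "1 / 2 - 1 / p < b"
  using assms frac_le[of 1 1 p r] by simp

lemma increment_mult_pdm_tail:
  fixes \<mu> :: "'a measure"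
  assumes P: "prob_space \<mu>" and p: "1 \<le> p"
    and \<pi>1: "\<pi>1 \<in> measurable \<mu> T1" and f1: "memLp (seqlaw (distr \<mu> T1 \<pi>1)) r1 f1" and r1: "2 * p \<le> r1"
    and sum1: "summable (pdm (distr \<mu> T1 \<pi>1) r1 f1)"
    and tail1: "(\<lambda>t. \<Sum>s. pdm (distr \<mu> T1 \<pi>1) r1 f1 (s + t)) \<in> O(\<lambda>t. real t powr -b1)"
    and \<pi>2: "\<pi>2 \<in> measurable \<mu> T2" and f2: "memLp (seqlaw (distr \<mu> T2 \<pi>2)) r2 f2" and r2: "2 * p \<le> r2"
    and sum2: "summable (pdm (distr \<mu> T2 \<pi>2) r2 f2)"
    and tail2: "(\<lambda>t. \<Sum>s. pdm (distr \<mu> T2 \<pi>2) r2 f2 (s + t)) \<in> O(\<lambda>t. real t powr -b2)"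
  defines "F \<equiv> \<lambda>y. increment f1 \<pi>1 y * increment f2 \<pi>2 y"
  shows "memLp (seqlaw \<mu>) p F \<and> summable (pdm \<mu> p F)
    \<and> (\<lambda>t. \<Sum>s. pdm \<mu> p F (s + t)) \<in> O(\<lambda>t. real t powr - min b1 b2)"
  using memLp_increment_mult[OF P p \<pi>1 f1 r1 \<pi>2 f2 r2]
    summable_if_dominated[OF pdm_nonneg sum1 sum2 pdm_increment_mult_le[OF P p \<pi>1 f1 r1 \<pi>2 f2 r2] tail1 tail2]
    tail_bigo_if_dominated[OF pdm_nonneg sum1 sum2 pdm_increment_mult_le[OF P p \<pi>1 f1 r1 \<pi>2 f2 r2] tail1 tail2]
  unfolding F_def by blast

theorem lemmaA2:
  fixes Me :: "'e measure" and Mx :: "'x measure"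
    and \<rho> :: "('e \<times> (nat \<Rightarrow> 'x)) measure"
    and d :: nat
    and g :: "(nat \<Rightarrow> 'e) \<Rightarrow> real"
    and h :: "nat \<Rightarrow> (nat \<Rightarrow> 'x) \<Rightarrow> real"
    and q q' \<theta> \<gamma> A \<alpha> :: real
  defines "\<mu>\<eta> \<equiv> distr \<rho> Me fst"
    and "\<mu>\<xi> \<equiv> (\<lambda>j. distr \<rho> Mx (\<lambda>z. snd z j))"
    and "\<nu> \<equiv> (\<lambda>j. distr \<rho> (Me \<Otimes>\<^sub>M Mx) (\<lambda>z. (fst z, snd z j)))"
    and "\<mu>G \<equiv> distr \<rho> (PiM {1..d} (\<lambda>_. Mx)) snd"
    and "a \<equiv> (\<lambda>j (y :: nat \<Rightarrow> 'e \<times> 'x).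
              (h j (\<lambda>m. snd (y m)) - h j (\<lambda>m. snd (y (Suc m))))
            * (g (\<lambda>m. fst (y m)) - g (\<lambda>m. fst (y (Suc m)))))"
    and "b \<equiv> (\<lambda>k l (y :: nat \<Rightarrow> (nat \<Rightarrow> 'x)).
              (h k (\<lambda>m. y m k) - h k (\<lambda>m. y (Suc m) k))
            * (h l (\<lambda>m. y m l) - h l (\<lambda>m. y (Suc m) l)))"
  assumes prob: "prob_space \<rho>"
    and sets_rho: "sets \<rho> = sets (Me \<Otimes>\<^sub>M PiM {1..d} (\<lambda>_. Mx))"
    \<comment> \<open>(C1)\<close>
    and q_gt: "q > 4"
    and g_meas: "g \<in> borel_measurable (seqlaw Me)"
    and eps_mean: "(\<integral>x. g x \<partial>seqlaw \<mu>\<eta>) = 0"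
    and eps_Lq: "memLp (seqlaw \<mu>\<eta>) q g"
    \<comment> \<open>(C3)\<close>
    and gamma_def: "\<gamma> = (q\<^sup>2 - 4 + (q - 2) * sqrt (q\<^sup>2 + 20 * q + 4)) / (8 * q)"
    and A_gt: "A > 2 / 3 * (1 / q + 1 + \<gamma>)"
    and C3_sum: "summable (\<lambda>s. pdm \<mu>\<eta> q g s)"
    and C3_tail: "(\<lambda>t::nat. \<Sum>s. pdm \<mu>\<eta> q g (s + t))
                    \<in> O(\<lambda>t. real t powr (- \<gamma>) * ln (real t) powr (- A))"
    \<comment> \<open>(C4)\<close>
    and theta_pos: "\<theta> > 0"
    and q'_gt: "q' > max 4 (\<theta> * q)"
    and h_meas: "\<And>j. j \<in> {1..d} \<Longrightarrow> h j \<in> borel_measurable (seqlaw Mx)"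
    and X_mean: "\<And>j. j \<in> {1..d} \<Longrightarrow> (\<integral>x. h j x \<partial>seqlaw (\<mu>\<xi> j)) = 0"
    and X_Lq': "\<And>j. j \<in> {1..d} \<Longrightarrow> memLp (seqlaw (\<mu>\<xi> j)) q' (h j)"
    \<comment> \<open>(C6)\<close>
    and alpha_gt: "\<alpha> > 1 / 2 - 1 / q'"
    and C6_sum: "\<And>j. j \<in> {1..d} \<Longrightarrow> summable (\<lambda>s. pdm (\<mu>\<xi> j) q' (h j) s)"
    and C6_tail: "\<And>j. j \<in> {1..d} \<Longrightarrow>
                   (\<lambda>t::nat. \<Sum>s. pdm (\<mu>\<xi> j) q' (h j) (s + t)) \<in> O(\<lambda>t. real t powr (- \<alpha>))"
  shows "(\<forall>j \<in> {1..d}.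
            let p = min q q' / 2 in
            memLp (seqlaw (\<nu> j)) p (a j)
            \<and> summable (\<lambda>s. pdm (\<nu> j) p (a j) s)
            \<and> (\<exists>\<alpha>1 > 1 / 2 - 1 / p.
                 (\<lambda>t::nat. \<Sum>s. pdm (\<nu> j) p (a j) (s + t)) \<in> O(\<lambda>t. real t powr (- \<alpha>1))))
       \<and> (\<forall>k \<in> {1..d}. \<forall>l \<in> {1..d}.
            let p = q' / 2 in
            memLp (seqlaw \<mu>G) p (b k l)
            \<and> summable (\<lambda>s. pdm \<mu>G p (b k l) s)
            \<and> (\<exists>\<alpha>2 > 1 / 2 - 1 / p.
                 (\<lambda>t::nat. \<Sum>s. pdm \<mu>G p (b k l) (s + t)) \<in> O(\<lambda>t. real t powr (- \<alpha>2))))"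
proof -
  note law_defs = assms(1-4) and summand_defs = assms(5,6)
  interpret prob_space \<rho>
    by (rule prob)
  have fst_meas: "fst \<in> measurable \<rho> Me" and snd_meas: "snd \<in> measurable \<rho> (PiM {1..d} (\<lambda>_. Mx))"
    by (simp_all add: measurable_cong_sets[OF sets_rho refl])
  have "1 / 2 < \<gamma>" and "0 < 1 / q"
    using gamma_gt_half[OF q_gt] gamma_def q_gt by simp_all
  then have "0 < 2 / 3 * (1 / q + 1 + \<gamma>)" and \<gamma>_gt: "1 / 2 - 1 / q < \<gamma>"
    by (intro mult_pos_pos, linarith+)
  then have "0 \<le> A"
    using A_gt by linarith
  then have g_tail: "(\<lambda>t. \<Sum>s. pdm \<mu>\<eta> q g (s + t)) \<in> O(\<lambda>t. real t powr -\<gamma>)"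
    by (rule bigo_drop_ln_powr[OF C3_tail])
  show ?thesis
  proof (intro conjI ballI)
    fix j assume j: "j \<in> {1..d}"
    define p where "p = min q q' / 2"
    have p: "1 \<le> p" "2 * p \<le> q" "2 * p \<le> q'"
      using q_gt q'_gt by (auto simp: p_def)
    have "(\<lambda>z. (fst z, snd z j)) \<in> measurable \<rho> (Me \<Otimes>\<^sub>M Mx)"
      using fst_meas snd_meas j by measurable
    then have "prob_space (\<nu> j)" "snd \<in> measurable (\<nu> j) Mx" "fst \<in> measurable (\<nu> j) Me"
      "distr (\<nu> j) Mx snd = \<mu>\<xi> j" "distr (\<nu> j) Me fst = \<mu>\<eta>"
      by (simp_all add: law_defs prob_space_distr distr_distr comp_def)
    then have "memLp (seqlaw (\<nu> j)) p (a j) \<and> summable (pdm (\<nu> j) p (a j))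
        \<and> (\<lambda>t. \<Sum>s. pdm (\<nu> j) p (a j) (s + t)) \<in> O(\<lambda>t. real t powr - min \<alpha> \<gamma>)"
      using increment_mult_pdm_tail[of "\<nu> j" p snd Mx q' "h j" \<alpha> fst Me q g \<gamma>]
        X_Lq' C6_sum C6_tail j eps_Lq C3_sum g_tail p
      by (simp add: summand_defs increment_def)
    moreover have "1 / 2 - 1 / p < min \<alpha> \<gamma>"
      using p half_minus_inverse_less[OF _ _ alpha_gt] half_minus_inverse_less[OF _ _ \<gamma>_gt] by simp
    ultimately show "let p = min q q' / 2 in
        memLp (seqlaw (\<nu> j)) p (a j) \<and> summable (\<lambda>s. pdm (\<nu> j) p (a j) s)
        \<and> (\<exists>\<alpha>1 > 1 / 2 - 1 / p. (\<lambda>t::nat. \<Sum>s. pdm (\<nu> j) p (a j) (s + t)) \<in> O(\<lambda>t. real t powr (- \<alpha>1)))"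
      unfolding Let_def p_def[symmetric] by blast
  next
    fix k l assume k: "k \<in> {1..d}" and l: "l \<in> {1..d}"
    define p where "p = q' / 2"
    have p: "1 \<le> p" "2 * p \<le> q'"
      using q'_gt by (auto simp: p_def)
    have "prob_space \<mu>G" "(\<lambda>v. v k) \<in> measurable \<mu>G Mx" "(\<lambda>v. v l) \<in> measurable \<mu>G Mx"
      "distr \<mu>G Mx (\<lambda>v. v k) = \<mu>\<xi> k" "distr \<mu>G Mx (\<lambda>v. v l) = \<mu>\<xi> l"
      using snd_meas k l by (simp_all add: law_defs prob_space_distr distr_distr comp_def)
    then have "memLp (seqlaw \<mu>G) p (b k l) \<and> summable (pdm \<mu>G p (b k l))
        \<and> (\<lambda>t. \<Sum>s. pdm \<mu>G p (b k l) (s + t)) \<in> O(\<lambda>t. real t powr -\<alpha>)"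
      using increment_mult_pdm_tail[of \<mu>G p "\<lambda>v. v k" Mx q' "h k" \<alpha> "\<lambda>v. v l" Mx q' "h l" \<alpha>]
        X_Lq' C6_sum C6_tail k l p
      by (simp add: summand_defs increment_def)
    moreover have "1 / 2 - 1 / p < \<alpha>"
      using p half_minus_inverse_less[OF _ _ alpha_gt] by simp
    ultimately show "let p = q' / 2 in
        memLp (seqlaw \<mu>G) p (b k l) \<and> summable (\<lambda>s. pdm \<mu>G p (b k l) s)
        \<and> (\<exists>\<alpha>2 > 1 / 2 - 1 / p. (\<lambda>t::nat. \<Sum>s. pdm \<mu>G p (b k l) (s + t)) \<in> O(\<lambda>t. real t powr (- \<alpha>2)))"
      unfolding Let_def p_def[symmetric] by blast
  qed
qed

end
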